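(* Let $\Gamma$ be a graph whose switching class is a non-trivial regular two-graph. Then $\Gamma$ is not bipartite.
   Context: Graphs are finite, simple and undirected. For a graph $\Gamma$ with adjacency matrix $A$ on $v$ vertices, the Seidel matrix is $S(\Gamma)=J-I-2A$. For a partition $\Pi=\{U,W\}$ of the vertex set (one part possibly empty), Seidel switching gives the graph $\Gamma^\Pi$ on the same vertices in which two distinct vertices are adjacent iff either they are adjacent in $\Gamma$ and lie in the same part, or they are non-adjacent in $\Gamma$ and lie in different parts. The switching class $[\Gamma]$ is the set of all such $\Gamma^\Pi$. It is a regular two-graph if $S(\Gamma)$ has exactly two distinct eigenvalues; it is trivial if it contains a complete graph or an edgeless graph, and non-trivial otherwise. *)

theory Defs
  imports "HOL-Analysis.Analysis"
begin

definition simple_graph :: "('n::finite \<Rightarrow> 'n \<Rightarrow> bool) \<Rightarrow> bool" where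
  "simple_graph E \<longleftrightarrow> (\<forall>x y. E x y \<longrightarrow> E y x) \<and> (\<forall>x. \<not> E x x)"

definition adjacency_matrix :: "('n::finite \<Rightarrow> 'n \<Rightarrow> bool) \<Rightarrow> real^'n^'n" where
  "adjacency_matrix E = (\<chi> i j. if E i j then 1 else 0)"

definition all_ones :: "real^'n^'n" where
  "all_ones = (\<chi> i j. 1)"

definition seidel_matrix :: "('n::finite \<Rightarrow> 'n \<Rightarrow> bool) \<Rightarrow> real^'n^'n" where
  "seidel_matrix E = all_ones - mat 1 - 2 *\<^sub>R adjacency_matrix E"

definition is_eigenvalue :: "real^'n^'n \<Rightarrow> real \<Rightarrow> bool" where
  "is_eigenvalue M c \<longleftrightarrow> (\<exists>x. x \<noteq> 0 \<and> M *v x = c *\<^sub>R x)"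

definition switch :: "('n \<Rightarrow> 'n \<Rightarrow> bool) \<Rightarrow> 'n set \<Rightarrow> 'n \<Rightarrow> 'n \<Rightarrow> bool" where
  "switch E U x y \<longleftrightarrow> x \<noteq> y \<and>
     ((E x y \<and> (x \<in> U \<longleftrightarrow> y \<in> U)) \<or> (\<not> E x y \<and> \<not> (x \<in> U \<longleftrightarrow> y \<in> U)))"

definition switching_class :: "('n \<Rightarrow> 'n \<Rightarrow> bool) \<Rightarrow> ('n \<Rightarrow> 'n \<Rightarrow> bool) set" where
  "switching_class E = {switch E U | U. True}"

text \<open>The switching class of E is a regular two-graph iff S(E) has exactly two distinct eigenvalues.\<close>
definition regular_two_graph :: "('n::finite \<Rightarrow> 'n \<Rightarrow> bool) \<Rightarrow> bool" where
  "regular_two_graph E \<longleftrightarrow> card {c. is_eigenvalue (seidel_matrix E) c} = 2"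

definition complete_graph :: "('n \<Rightarrow> 'n \<Rightarrow> bool) \<Rightarrow> bool" where
  "complete_graph E \<longleftrightarrow> (\<forall>x y. x \<noteq> y \<longrightarrow> E x y)"

definition edgeless_graph :: "('n \<Rightarrow> 'n \<Rightarrow> bool) \<Rightarrow> bool" where
  "edgeless_graph E \<longleftrightarrow> (\<forall>x y. \<not> E x y)"

definition trivial_switching_class :: "('n \<Rightarrow> 'n \<Rightarrow> bool) \<Rightarrow> bool" where
  "trivial_switching_class E \<longleftrightarrow>
     (\<exists>G \<in> switching_class E. complete_graph G \<or> edgeless_graph G)"

definition bipartite :: "('n \<Rightarrow> 'n \<Rightarrow> bool) \<Rightarrow> bool" where
  "bipartite E \<longleftrightarrow> (\<exists>U. \<forall>x y. E x y \<longrightarrow> (x \<in> U \<longleftrightarrow> y \<notin> U))"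

end

theory Submission
  imports Defs
begin

text \<open>If the graph is bipartite with colour classes U and W, its Seidel matrix has the block
  form [[J - I, B], [B^T, J - I]] with a +-1 matrix B. A symmetric matrix with exactly two
  eigenvalues satisfies S^2 = a S + b I. On the off-diagonal blocks this says r i + c j =
  (a + 2) B i j, where r and c are the row and column sums of B; on the diagonal blocks it says
  |U| - 2 + (B B^T) i i' = a for i \<noteq> i'. If a = -2, all row and column sums vanish, and counting
  gives |W| = |U| (|U| - 1) and |U| = |W| (|W| - 1), so |U| = |W| = 2 and a = 2 - v. Otherwise B
  is constant, so that the graph is edgeless or complete bipartite (switching to edgeless), or
  v = 3 and a = -1 = 2 - v.
  Finally a = 2 - v forces every triangle to carry an odd number of edges, and switching with
  respect to a closed neighbourhood then yields the complete graph.\<close>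

lemma eq_0_if_linear_le_quadratic:
  fixes A B :: real
  assumes "A \<ge> 0" and le: "\<And>e. 2 * e * A \<le> e\<^sup>2 * B"
  shows "A = 0"
proof (rule ccontr)
  assume "A \<noteq> 0"
  with \<open>A \<ge> 0\<close> have "A > 0" by simp
  define e where "e = A / (\<bar>B\<bar> + 1)"
  have "e > 0" using \<open>A > 0\<close> by (simp add: e_def add_pos_nonneg)
  have "2 * A \<le> e * B" using le[of e] \<open>e > 0\<close> by (simp add: power2_eq_square mult.assoc)
  also have "\<dots> < e * (\<bar>B\<bar> + 1)" using \<open>e > 0\<close> by (intro mult_strict_left_mono) auto
  also have "\<dots> = A" by (simp add: e_def add_pos_nonneg)
  finally show False using \<open>A > 0\<close> by simp
qed

lemma symmetric_matrix_inner:
  fixes S :: "real^'n^'n"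
  assumes "transpose S = S"
  shows "(S *v x) \<bullet> y = x \<bullet> (S *v y)"
  by (metis assms dot_lmul_matrix vector_transpose_matrix)

text \<open>A maximiser u of the Rayleigh quotient on an invariant subspace is an eigenvector: for
  w = S u - l u, orthogonal to u, the maximality of u against u + e w gives
  2 e |w|^2 <= O(e^2).\<close>

lemma rayleigh_maximiser_eigenvector:
  fixes S :: "real^'n^'n"
  assumes sym: "transpose S = S" and "subspace R" and inv: "\<And>x. x \<in> R \<Longrightarrow> S *v x \<in> R"
    and "u \<in> R" "norm u = 1"
    and max: "\<And>x. x \<in> R \<Longrightarrow> x \<bullet> (S *v x) \<le> (u \<bullet> (S *v u)) * (norm x)\<^sup>2"
  shows "S *v u = (u \<bullet> (S *v u)) *\<^sub>R u"
proof -
  define l where "l = u \<bullet> (S *v u)"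
  define w where "w = S *v u - l *\<^sub>R u"
  have "w \<in> R" unfolding w_def using inv \<open>u \<in> R\<close> \<open>subspace R\<close>
    by (simp add: subspace_diff subspace_scale)
  have uu: "u \<bullet> u = 1" using \<open>norm u = 1\<close> by (simp add: dot_square_norm)
  have uw: "u \<bullet> w = 0" unfolding w_def l_def using uu by (simp add: inner_diff_right)
  have wSu: "w \<bullet> (S *v u) = w \<bullet> w"
    using uw by (simp add: w_def l_def inner_diff_right inner_diff_left inner_commute)
  have "2 * e * (w \<bullet> w) \<le> e\<^sup>2 * (l * (w \<bullet> w) - w \<bullet> (S *v w))" for e
  proof -
    have "u + e *\<^sub>R w \<in> R" using \<open>u \<in> R\<close> \<open>w \<in> R\<close> \<open>subspace R\<close>
      by (simp add: subspace_add subspace_scale)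
    hence "(u + e *\<^sub>R w) \<bullet> (S *v (u + e *\<^sub>R w)) \<le> l * (norm (u + e *\<^sub>R w))\<^sup>2"
      using max l_def by blast
    moreover have "(norm (u + e *\<^sub>R w))\<^sup>2 = 1 + e\<^sup>2 * (w \<bullet> w)"
      unfolding power2_norm_eq_inner
      by (simp add: inner_add_left inner_add_right uu uw inner_commute power2_eq_square)
    moreover have "u \<bullet> (S *v w) = w \<bullet> (S *v u)"
      using symmetric_matrix_inner[OF sym, of u w] by (simp add: inner_commute)
    ultimately show ?thesis
      by (simp add: matrix_vector_right_distrib matrix_vector_mult_scaleR inner_add_left
          inner_add_right wSu l_def power2_eq_square algebra_simps)
  qed
  hence "w \<bullet> w = 0" by (rule eq_0_if_linear_le_quadratic[OF inner_ge_zero])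
  thus ?thesis by (simp add: w_def l_def)
qed

lemma symmetric_matrix_eigenvector_in_invariant_subspace:
  fixes S :: "real^'n^'n"
  assumes sym: "transpose S = S" and "subspace R" and inv: "\<And>x. x \<in> R \<Longrightarrow> S *v x \<in> R"
    and "y \<in> R" "y \<noteq> 0"
  obtains u where "u \<in> R" "u \<noteq> 0" "S *v u = (u \<bullet> (S *v u)) *\<^sub>R u"
proof -
  define K where "K = R \<inter> sphere 0 1"
  have "compact K"
    unfolding K_def using closed_subspace[OF \<open>subspace R\<close>] by (simp add: closed_Int_compact)
  moreover have "y /\<^sub>R norm y \<in> K"
    unfolding K_def using assms by (simp add: subspace_scale)
  moreover have "continuous_on K (\<lambda>x. x \<bullet> (S *v x))"
    by (intro continuous_intros linear_continuous_on matrix_vector_mul_bounded_linear)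
  ultimately obtain u where u: "u \<in> K" and umax: "\<And>z. z \<in> K \<Longrightarrow> z \<bullet> (S *v z) \<le> u \<bullet> (S *v u)"
    using continuous_attains_sup[of K "\<lambda>x. x \<bullet> (S *v x)"] by blast
  have "x \<bullet> (S *v x) \<le> (u \<bullet> (S *v u)) * (norm x)\<^sup>2" if "x \<in> R" for x
  proof (cases "x = 0")
    case False
    have "x /\<^sub>R norm x \<in> K" unfolding K_def using that \<open>subspace R\<close> False
      by (simp add: subspace_scale)
    from umax[OF this] False show ?thesis
      by (simp add: matrix_vector_mult_scaleR power2_eq_square field_simps)
  qed simp
  with u show ?thesis
    using that rayleigh_maximiser_eigenvector[OF sym \<open>subspace R\<close> inv] unfolding K_def by force
qed

text \<open>The image of \<open>P = (S - p I)(S - q I)\<close> is S-invariant; an eigenvector u = P y of S in it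
  is killed by P, so |u|^2 = y . P u = 0.\<close>

lemma symmetric_matrix_square_if_two_eigenvalues:
  fixes S :: "real^'n^'n"
  assumes sym: "transpose S = S" and eig: "\<And>c. is_eigenvalue S c \<Longrightarrow> c = p \<or> c = q"
  shows "S ** S = (p + q) *\<^sub>R S - (p * q) *\<^sub>R mat 1"
proof -
  define P where "P x = S *v (S *v x) - (p + q) *\<^sub>R (S *v x) + (p * q) *\<^sub>R x" for x
  have "linear P"
    unfolding linear_iff P_def
    by (simp add: matrix_vector_right_distrib matrix_vector_mult_scaleR algebra_simps)
  have P_comm: "S *v P x = P (S *v x)" for x
    unfolding P_def
    by (simp add: matrix_vector_right_distrib matrix_vector_mult_diff_distrib matrix_vector_mult_scaleR)
  have P_sym: "P x \<bullet> y = x \<bullet> P y" for x y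
    unfolding P_def
    by (simp add: inner_add_left inner_add_right inner_diff_left inner_diff_right symmetric_matrix_inner[OF sym])
  have "P x = 0" for x
  proof (rule ccontr)
    assume "P x \<noteq> 0"
    have "subspace (range P)" using linear_subspace_image[OF \<open>linear P\<close> subspace_UNIV] .
    moreover have "S *v z \<in> range P" if "z \<in> range P" for z using that by (auto simp: P_comm)
    ultimately obtain u where "u \<in> range P" "u \<noteq> 0" and ev: "S *v u = (u \<bullet> (S *v u)) *\<^sub>R u"
      using symmetric_matrix_eigenvector_in_invariant_subspace[OF sym] \<open>P x \<noteq> 0\<close> by blast
    then obtain y where y: "u = P y" by blast
    define l where "l = u \<bullet> (S *v u)"
    have "is_eigenvalue S l" unfolding is_eigenvalue_def l_def using \<open>u \<noteq> 0\<close> ev by blast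
    hence "l = p \<or> l = q" by (rule eig)
    moreover have "P u = ((l - p) * (l - q)) *\<^sub>R u"
      unfolding P_def using ev by (simp flip: l_def add: matrix_vector_mult_scaleR algebra_simps)
    ultimately have "P u = 0" by auto
    hence "u \<bullet> u = 0" using P_sym[of y u] y by simp
    with \<open>u \<noteq> 0\<close> show False by simp
  qed
  thus ?thesis
    by (simp add: matrix_eq P_def matrix_vector_mul_assoc[symmetric] scaleR_matrix_vector_assoc[symmetric]
        matrix_vector_mult_diff_rdistrib algebra_simps)
qed

lemma seidel_matrix_entry:
  assumes "simple_graph E"
  shows "seidel_matrix E $ i $ j = (if i = j then 0 else if E i j then -1 else 1)"
  using assms unfolding simple_graph_def
  by (auto simp: seidel_matrix_def all_ones_def adjacency_matrix_def mat_def)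

lemma seidel_matrix_symmetric:
  assumes "simple_graph E"
  shows "transpose (seidel_matrix E) = seidel_matrix E"
  using assms by (auto simp: vec_eq_iff transpose_def seidel_matrix_entry simple_graph_def)

lemma regular_two_graph_seidel_square:
  assumes "simple_graph E" and "regular_two_graph E"
  obtains a b where "seidel_matrix E ** seidel_matrix E = a *\<^sub>R seidel_matrix E + b *\<^sub>R mat 1"
proof -
  obtain p q where "{c. is_eigenvalue (seidel_matrix E) c} = {p, q}"
    using assms(2) by (auto simp: regular_two_graph_def card_2_iff)
  with symmetric_matrix_square_if_two_eigenvalues[OF seidel_matrix_symmetric[OF assms(1)], of p q]
  show ?thesis using that[of "p + q" "- (p * q)"] by auto
qed

definition is_bipartition :: "('n \<Rightarrow> 'n \<Rightarrow> bool) \<Rightarrow> 'n set \<Rightarrow> bool" where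
  "is_bipartition E U \<longleftrightarrow> (\<forall>x y. E x y \<longrightarrow> (x \<in> U \<longleftrightarrow> y \<notin> U))"

lemma bipartite_iff_bipartition: "bipartite E \<longleftrightarrow> (\<exists>U. is_bipartition E U)"
  by (simp add: bipartite_def is_bipartition_def)

lemma is_bipartition_Compl: "is_bipartition E U \<Longrightarrow> is_bipartition E (- U)"
  by (auto simp: is_bipartition_def)

lemma trivial_switching_classI:
  "complete_graph (switch E U) \<or> edgeless_graph (switch E U) \<Longrightarrow> trivial_switching_class E"
  unfolding trivial_switching_class_def switching_class_def by blast

lemma card_add_card_Compl: "card (U :: 'n::finite set) + card (- U) = CARD('n)"
  using card_Un_disjoint[of U "- U"] by (simp add: Compl_partition)

lemma sum_add_sum_Compl: "sum f (U :: 'n::finite set) + sum f (- U) = sum f UNIV"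
  using sum.union_disjoint[of U "- U" f] by (simp add: Compl_partition)

lemma eq_2_if_mutually_pronic:
  fixes m n :: nat
  assumes n: "n = m * (m - 1)" and m: "m = n * (n - 1)" and "m \<ge> 1"
  shows "m = 2 \<and> n = 2"
proof -
  have "m \<ge> 2" using assms by (cases "m = 1") auto
  moreover have "n \<ge> 2" using assms by (cases "n = 1") auto
  ultimately have "m * 1 \<le> m * (m - 1)" "n * 1 \<le> n * (n - 1)" by (intro mult_le_mono2; simp)+
  then have "m = n" using n m by linarith
  then have "m * (m - 1) = m * 1" using n by linarith
  then have "m - 1 = 1" using \<open>m \<ge> 2\<close> by (simp only: mult_cancel1) simp
  then show ?thesis using \<open>m = n\<close> by simp
qed

locale regular_seidel_matrix =
  fixes E :: "'n::finite \<Rightarrow> 'n \<Rightarrow> bool" and s :: "'n \<Rightarrow> 'n \<Rightarrow> real" and a :: real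
  assumes simple: "simple_graph E"
    and s_eq: "s i j = (if i = j then 0 else if E i j then -1 else 1)"
    and seidel_square: "i \<noteq> j \<Longrightarrow> (\<Sum>k\<in>UNIV. s i k * s k j) = a * s i j"
begin

lemma E_commute: "E x y \<longleftrightarrow> E y x"
  using simple unfolding simple_graph_def by blast

lemma E_irrefl: "\<not> E x x"
  using simple unfolding simple_graph_def by blast

lemma s_commute: "s i j = s j i"
  by (simp add: s_eq E_commute eq_commute)

lemma s_diag [simp]: "s i i = 0"
  by (simp add: s_eq)

lemma s_offdiag: "i \<noteq> j \<Longrightarrow> s i j = 1 \<or> s i j = -1"
  by (simp add: s_eq)

lemma triangle_sum:
  assumes "i \<noteq> j"
  shows "(\<Sum>k\<in>- {i, j}. s i j * s i k * s k j) = a"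
proof -
  have "(\<Sum>k\<in>UNIV. s i j * s i k * s k j) = s i j * (a * s i j)"
    by (simp add: mult.assoc sum_distrib_left[symmetric] seidel_square[OF assms])
  also have "\<dots> = a" using s_offdiag[OF assms] by auto
  finally show ?thesis
    using sum_add_sum_Compl[of "\<lambda>k. s i j * s i k * s k j" "{i, j}"] assms by simp
qed

text \<open>When a = 2 - v, the v - 2 terms of the triangle sum, each +-1, must all equal -1.\<close>

lemma trivial_if_a_eq_2_minus_card:
  assumes a: "a = 2 - real CARD('n)"
  shows "trivial_switching_class E"
proof -
  have odd_triangle: "s i j * s i k * s k j = -1" if "i \<noteq> j" "k \<noteq> i" "k \<noteq> j" for i j k
  proof -
    have "card (- {i, j}) = CARD('n) - 2"
      using card_add_card_Compl[of "{i, j}"] \<open>i \<noteq> j\<close> by simp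
    moreover have "CARD('n) \<ge> 2"
      using card_add_card_Compl[of "{i, j}"] \<open>i \<noteq> j\<close> by simp
    ultimately have "(\<Sum>k\<in>- {i, j}. s i j * s i k * s k j + 1) = 0"
      using triangle_sum[OF \<open>i \<noteq> j\<close>] a by (simp add: sum.distrib of_nat_diff)
    moreover have "\<forall>k\<in>- {i, j}. 0 \<le> s i j * s i k * s k j + 1"
      using s_offdiag[OF \<open>i \<noteq> j\<close>] s_offdiag[of i] s_offdiag[of _ j] by fastforce
    ultimately have "s i j * s i k * s k j + 1 = 0"
      using that by (subst (asm) sum_nonneg_eq_0_iff) auto
    then show ?thesis by simp
  qed
  fix x0 :: 'n
  define X where "X = insert x0 {y. E x0 y}"
  have "switch E X x y" if "x \<noteq> y" for x y
  proof -
    have "E x y \<longleftrightarrow> (E x0 x \<longleftrightarrow> E x0 y)" if "x \<noteq> x0" "y \<noteq> x0"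
      using odd_triangle[of x y x0] \<open>x \<noteq> y\<close> that
      by (auto simp: s_eq E_commute split: if_splits)
    then show ?thesis
      using \<open>x \<noteq> y\<close> E_irrefl E_commute[of x0] unfolding switch_def X_def by auto
  qed
  then have "complete_graph (switch E X)" by (simp add: complete_graph_def)
  then show ?thesis by (blast intro: trivial_switching_classI)
qed

context
  fixes U :: "'n set"
  assumes bip: "is_bipartition E U"
begin

lemma s_eq_1_if_same_side: "x \<noteq> y \<Longrightarrow> (x \<in> U \<longleftrightarrow> y \<in> U) \<Longrightarrow> s x y = 1"
  using bip unfolding is_bipartition_def by (auto simp: s_eq)

lemma cross_sums:
  assumes "i \<in> U" "j \<notin> U"
  shows "(\<Sum>k\<in>- U. s i k) + (\<Sum>k\<in>U. s k j) = (a + 2) * s i j"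
proof -
  have "i \<noteq> j" using assms by auto
  have "(\<Sum>k\<in>U. s i k * s k j) = (\<Sum>k\<in>U. s k j - (if k = i then s i j else 0))"
    using s_eq_1_if_same_side[of i] assms by (intro sum.cong) auto
  also have "\<dots> = (\<Sum>k\<in>U. s k j) - s i j" using assms by (simp add: sum_subtractf)
  finally have "(\<Sum>k\<in>U. s i k * s k j) = (\<Sum>k\<in>U. s k j) - s i j" .
  moreover have "(\<Sum>k\<in>- U. s i k * s k j) = (\<Sum>k\<in>- U. s i k - (if k = j then s i j else 0))"
    using s_eq_1_if_same_side[of _ j] assms by (intro sum.cong) auto
  moreover have "\<dots> = (\<Sum>k\<in>- U. s i k) - s i j" using assms by (simp add: sum_subtractf)
  moreover have "a * s i j = (\<Sum>k\<in>U. s i k * s k j) + (\<Sum>k\<in>- U. s i k * s k j)"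
    using seidel_square[OF \<open>i \<noteq> j\<close>] sum_add_sum_Compl[of "\<lambda>k. s i k * s k j" U] by simp
  ultimately show ?thesis by (simp add: algebra_simps)
qed

lemma same_side_sum:
  assumes "i \<in> U" "i' \<in> U" "i \<noteq> i'"
  shows "real (card U) - 2 + (\<Sum>k\<in>- U. s i k * s k i') = a"
proof -
  have "(\<Sum>k\<in>U. s i k * s k i') = (\<Sum>k\<in>U. 1 - (if k = i then 1 else 0) - (if k = i' then 1 else 0))"
    using s_eq_1_if_same_side[of i] s_eq_1_if_same_side[of _ i'] assms by (intro sum.cong) auto
  also have "\<dots> = real (card U) - 2" using assms by (simp add: sum_subtractf)
  finally have "(\<Sum>k\<in>U. s i k * s k i') = real (card U) - 2" .
  moreover have "a = (\<Sum>k\<in>U. s i k * s k i') + (\<Sum>k\<in>- U. s i k * s k i')"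
    using seidel_square[OF \<open>i \<noteq> i'\<close>] s_eq_1_if_same_side[of i i'] assms
      sum_add_sum_Compl[of "\<lambda>k. s i k * s k i'" U] by simp
  ultimately show ?thesis by simp
qed

text \<open>For a = -2 every row sum of B is minus every column sum; summing all entries of B in two
  ways forces them all to vanish.\<close>

lemma cross_column_sum_eq_0:
  assumes a: "a = -2" and "i0 \<in> U" "j \<notin> U"
  shows "(\<Sum>k\<in>U. s k j) = 0"
proof -
  define R where "R i = (\<Sum>k\<in>- U. s i k)" for i
  define C where "C j = (\<Sum>k\<in>U. s k j)" for j
  have RC: "R i = - C j" if "i \<in> U" "j \<notin> U" for i j
    using cross_sums[OF that] a unfolding R_def C_def by simp
  have "(\<Sum>i\<in>U. R i) = (\<Sum>j\<in>- U. C j)" unfolding R_def C_def by (rule sum.swap)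
  moreover have "(\<Sum>i\<in>U. R i) = real (card U) * - C j" using RC \<open>j \<notin> U\<close> by simp
  moreover have "(\<Sum>j\<in>- U. C j) = (\<Sum>j\<in>- U. - R i0)"
    using RC[OF \<open>i0 \<in> U\<close>] by (intro sum.cong refl) (simp add: minus_equation_iff[of "R i0"])
  ultimately have "(real (card U) + real (card (- U))) * C j = 0"
    using RC[OF assms(2,3)] by (simp add: algebra_simps)
  moreover have "card U > 0" using \<open>i0 \<in> U\<close> by (auto simp: card_gt_0_iff)
  ultimately show ?thesis unfolding C_def by (simp add: add_pos_nonneg)
qed

lemma card_Compl_if_a_eq_minus_2:
  assumes a: "a = -2" and "i0 \<in> U"
  shows "card (- U) = card U * (card U - 1)"
proof -
  have "card U \<ge> 1" using \<open>i0 \<in> U\<close> by (auto simp: Suc_le_eq card_gt_0_iff)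
  have "(\<Sum>i\<in>U - {i0}. \<Sum>k\<in>- U. s i0 k * s k i) = (\<Sum>i\<in>U - {i0}. - real (card U))"
  proof (intro sum.cong refl)
    fix i assume "i \<in> U - {i0}"
    then show "(\<Sum>k\<in>- U. s i0 k * s k i) = - real (card U)"
      using same_side_sum[of i0 i] \<open>i0 \<in> U\<close> a by auto
  qed
  also have "\<dots> = - real (card U) * (real (card U) - 1)"
    using \<open>i0 \<in> U\<close> \<open>card U \<ge> 1\<close> by (simp add: of_nat_diff)
  finally have lhs: "(\<Sum>i\<in>U - {i0}. \<Sum>k\<in>- U. s i0 k * s k i) = \<dots>" .
  have "(\<Sum>i\<in>U - {i0}. \<Sum>k\<in>- U. s i0 k * s k i) = (\<Sum>k\<in>- U. s i0 k * (\<Sum>i\<in>U - {i0}. s i k))"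
    by (subst sum.swap) (simp add: sum_distrib_left s_commute)
  also have "\<dots> = (\<Sum>k\<in>- U. -1)"
  proof (intro sum.cong refl)
    fix k assume "k \<in> - U"
    have "(\<Sum>i\<in>U. s i k) = s i0 k + (\<Sum>i\<in>U - {i0}. s i k)" using \<open>i0 \<in> U\<close> by (simp add: sum.remove)
    moreover have "s i0 k = 1 \<or> s i0 k = -1" using s_offdiag[of i0 k] \<open>k \<in> - U\<close> \<open>i0 \<in> U\<close> by auto
    ultimately show "s i0 k * (\<Sum>i\<in>U - {i0}. s i k) = -1"
      using cross_column_sum_eq_0[OF a \<open>i0 \<in> U\<close>, of k] \<open>k \<in> - U\<close> by auto
  qed
  finally have "- real (card (- U)) = - real (card U) * (real (card U) - 1)" using lhs by simp
  then have "real (card (- U)) = real (card U * (card U - 1))"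
    using \<open>card U \<ge> 1\<close> by (simp add: of_nat_diff)
  then show ?thesis by (simp only: of_nat_eq_iff)
qed

text \<open>For a \<noteq> -2, B i j = (r i + c j) / (a + 2); as the entries are +-1, the difference of two
  rows of B is either zero or a constant +-2.\<close>

lemma cross_rows_or_columns_constant:
  assumes "a + 2 \<noteq> 0"
  shows "(\<forall>i\<in>U. \<forall>j j'. j \<notin> U \<longrightarrow> j' \<notin> U \<longrightarrow> s i j = s i j') \<or>
         (\<forall>j. j \<notin> U \<longrightarrow> (\<forall>i i'. i \<in> U \<longrightarrow> i' \<in> U \<longrightarrow> s i j = s i' j))"
proof (rule disjCI)
  assume "\<not> (\<forall>j. j \<notin> U \<longrightarrow> (\<forall>i i'. i \<in> U \<longrightarrow> i' \<in> U \<longrightarrow> s i j = s i' j))"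
  then obtain j1 i1 i2 where j1: "j1 \<notin> U" and i1: "i1 \<in> U" and i2: "i2 \<in> U"
    and ne: "s i1 j1 \<noteq> s i2 j1" by blast
  have diff: "(a + 2) * (s i j - s i' j) = (a + 2) * (s i j' - s i' j')"
    if "i \<in> U" "i' \<in> U" "j \<notin> U" "j' \<notin> U" for i i' j j'
    unfolding right_diff_distrib
    using cross_sums[OF that(1,3)] cross_sums[OF that(2,3)] cross_sums[OF that(1,4)]
      cross_sums[OF that(2,4)] by linarith
  have row1: "s i1 j = s i1 j1" if "j \<notin> U" for j
  proof -
    have "s i1 j - s i2 j = s i1 j1 - s i2 j1" using diff[OF i1 i2 that j1] assms by simp
    moreover have "i1 \<noteq> j" "i2 \<noteq> j" "i1 \<noteq> j1" "i2 \<noteq> j1" using i1 i2 j1 that by auto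
    ultimately show ?thesis using ne s_offdiag[of i1 j] s_offdiag[of i2 j] s_offdiag[of i1 j1]
      s_offdiag[of i2 j1] by auto
  qed
  show "\<forall>i\<in>U. \<forall>j j'. j \<notin> U \<longrightarrow> j' \<notin> U \<longrightarrow> s i j = s i j'"
  proof (intro ballI allI impI)
    fix i j j' assume "i \<in> U" "j \<notin> U" "j' \<notin> U"
    from diff[OF \<open>i \<in> U\<close> i1 this(2,3)] assms have "s i j - s i1 j = s i j' - s i1 j'" by simp
    then show "s i j = s i j'" using row1[of j] row1[of j'] \<open>j \<notin> U\<close> \<open>j' \<notin> U\<close> by simp
  qed
qed

text \<open>With rows of both signs, the column sums give a + 2 = |-U| and the same-side sums give
  |U| = 2 |-U|, while a third vertex in U would force |U| = 0.\<close>

lemma a_eq_2_minus_card_if_rows_of_both_signs: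
  assumes row: "\<And>i j. i \<in> U \<Longrightarrow> j \<notin> U \<Longrightarrow> s i j = b i"
    and "i1 \<in> U" "i2 \<in> U" "b i1 \<noteq> b i2" and "j0 \<notin> U"
  shows "a = 2 - real CARD('n)"
proof -
  define m where "m = real (card U)"
  define n where "n = real (card (- U))"
  have b: "b i = 1 \<or> b i = -1" if "i \<in> U" for i
    using s_offdiag[of i j0] row[OF that \<open>j0 \<notin> U\<close>] that \<open>j0 \<notin> U\<close> by auto
  have b12: "b i2 = - b i1" using b[OF \<open>i1 \<in> U\<close>] b[OF \<open>i2 \<in> U\<close>] \<open>b i1 \<noteq> b i2\<close> by auto
  have row_sum: "(\<Sum>k\<in>- U. s i k) = n * b i" if "i \<in> U" for i
    using row[OF that] by (simp add: n_def)
  have same_side: "m - 2 + n * (b i * b i') = a" if "i \<in> U" "i' \<in> U" "i \<noteq> i'" for i i'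
    using same_side_sum[OF that] row[OF that(1)] row[OF that(2)] by (simp add: m_def n_def s_commute)
  have "(a + 2 - n) * (2 * b i1) = 0"
    using cross_sums[OF \<open>i1 \<in> U\<close> \<open>j0 \<notin> U\<close>] cross_sums[OF \<open>i2 \<in> U\<close> \<open>j0 \<notin> U\<close>]
      row_sum[OF \<open>i1 \<in> U\<close>] row_sum[OF \<open>i2 \<in> U\<close>] row[OF _ \<open>j0 \<notin> U\<close>] b12 \<open>i1 \<in> U\<close> \<open>i2 \<in> U\<close>
    by (simp add: algebra_simps)
  then have a_eq: "a + 2 = n" using b[OF \<open>i1 \<in> U\<close>] by auto
  have "i1 \<noteq> i2" using \<open>b i1 \<noteq> b i2\<close> by auto
  then have "m = 2 * n" using same_side[OF \<open>i1 \<in> U\<close> \<open>i2 \<in> U\<close>] b12 b[OF \<open>i1 \<in> U\<close>] a_eq by auto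
  have "U \<subseteq> {i1, i2}"
  proof
    fix i assume "i \<in> U"
    show "i \<in> {i1, i2}"
    proof (rule ccontr)
      assume "i \<notin> {i1, i2}"
      then have "m - 2 + n = a"
        using same_side[OF \<open>i1 \<in> U\<close> \<open>i \<in> U\<close>] same_side[OF \<open>i2 \<in> U\<close> \<open>i \<in> U\<close>]
          b[OF \<open>i \<in> U\<close>] b[OF \<open>i1 \<in> U\<close>] b12 by auto
      then show False using a_eq \<open>i1 \<in> U\<close> by (auto simp: m_def)
    qed
  qed
  then have "card U \<le> 2" using card_mono[of "{i1, i2}" U] \<open>i1 \<noteq> i2\<close> by simp
  moreover have "card (- U) \<ge> 1" using \<open>j0 \<notin> U\<close> by (auto simp: Suc_le_eq card_gt_0_iff)
  ultimately have "card U = 2" "card (- U) = 1" using \<open>m = 2 * n\<close> by (simp_all add: m_def n_def)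
  then show ?thesis using a_eq card_add_card_Compl[of U] by (simp add: n_def)
qed

lemma cross_block_constant_or_a_eq_2_minus_card:
  assumes rows: "\<forall>i\<in>U. \<forall>j j'. j \<notin> U \<longrightarrow> j' \<notin> U \<longrightarrow> s i j = s i j'" and "j0 \<notin> U"
  shows "(\<exists>c. \<forall>i\<in>U. \<forall>j. j \<notin> U \<longrightarrow> s i j = c) \<or> a = 2 - real CARD('n)"
proof -
  have row: "s i j = s i j0" if "i \<in> U" "j \<notin> U" for i j
    using rows that \<open>j0 \<notin> U\<close> by blast
  show ?thesis
  proof (cases "\<exists>c. \<forall>i\<in>U. s i j0 = c")
    case True
    then show ?thesis using row by metis
  next
    case False
    then obtain i1 i2 where "i1 \<in> U" "i2 \<in> U" "s i1 j0 \<noteq> s i2 j0" by metis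
    with a_eq_2_minus_card_if_rows_of_both_signs[OF row] \<open>j0 \<notin> U\<close> show ?thesis by blast
  qed
qed

end

lemma trivial_if_cross_block_constant:
  assumes bip: "is_bipartition E V" and const: "\<forall>i\<in>V. \<forall>j. j \<notin> V \<longrightarrow> s i j = c"
  shows "trivial_switching_class E"
proof -
  have cross: "s x y = c" if "x \<in> V \<longleftrightarrow> y \<notin> V" for x y
    using const that s_commute[of x y] by (cases "x \<in> V") auto
  show ?thesis
  proof (cases "c = 1")
    case True
    have "\<not> E x y" for x y
    proof
      assume "E x y"
      then have "x \<noteq> y" and "x \<in> V \<longleftrightarrow> y \<notin> V"
        using E_irrefl bip unfolding is_bipartition_def by auto
      with \<open>E x y\<close> show False using cross[of x y] True by (simp add: s_eq)
    qed
    then have "edgeless_graph (switch E {})" by (simp add: edgeless_graph_def switch_def)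
    then show ?thesis by (blast intro: trivial_switching_classI)
  next
    case False
    have "E x y" if "x \<in> V \<longleftrightarrow> y \<notin> V" for x y
      using cross[OF that] False that by (auto simp: s_eq split: if_splits)
    then have "edgeless_graph (switch E V)"
      using bip unfolding edgeless_graph_def switch_def is_bipartition_def by blast
    then show ?thesis by (blast intro: trivial_switching_classI)
  qed
qed

lemma trivial_if_bipartition:
  assumes bip: "is_bipartition E U"
  shows "trivial_switching_class E"
proof (cases "U = {} \<or> - U = {}")
  case True
  then show ?thesis using trivial_if_cross_block_constant[OF bip, of 1] by auto
next
  case False
  then obtain i0 j0 where "i0 \<in> U" "j0 \<notin> U" by blast
  have bip': "is_bipartition E (- U)" using is_bipartition_Compl[OF bip] .
  have "a = 2 - real CARD('n) \<or> (\<exists>V c. is_bipartition E V \<and> (\<forall>i\<in>V. \<forall>j. j \<notin> V \<longrightarrow> s i j = c))"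
  proof (cases "a = -2")
    case True
    have "card (- U) = card U * (card U - 1)"
      using card_Compl_if_a_eq_minus_2[OF bip True \<open>i0 \<in> U\<close>] .
    moreover have "card U = card (- U) * (card (- U) - 1)"
      using card_Compl_if_a_eq_minus_2[OF bip' True, of j0] \<open>j0 \<notin> U\<close> by simp
    moreover have "card U \<ge> 1" using \<open>i0 \<in> U\<close> by (auto simp: Suc_le_eq card_gt_0_iff)
    ultimately have "card U = 2 \<and> card (- U) = 2" by (rule eq_2_if_mutually_pronic)
    then show ?thesis using True card_add_card_Compl[of U] by simp
  next
    case False
    then have "a + 2 \<noteq> 0" by simp
    from cross_rows_or_columns_constant[OF bip this] show ?thesis
    proof
      assume "\<forall>i\<in>U. \<forall>j j'. j \<notin> U \<longrightarrow> j' \<notin> U \<longrightarrow> s i j = s i j'"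
      from cross_block_constant_or_a_eq_2_minus_card[OF bip this \<open>j0 \<notin> U\<close>]
      show ?thesis using bip by blast
    next
      assume columns: "\<forall>j. j \<notin> U \<longrightarrow> (\<forall>i i'. i \<in> U \<longrightarrow> i' \<in> U \<longrightarrow> s i j = s i' j)"
      have "\<forall>i\<in>- U. \<forall>j j'. j \<notin> - U \<longrightarrow> j' \<notin> - U \<longrightarrow> s i j = s i j'"
      proof (intro ballI allI impI)
        fix i j j' assume "i \<in> - U" "j \<notin> - U" "j' \<notin> - U"
        then have "s j i = s j' i" using columns by blast
        then show "s i j = s i j'" by (simp only: s_commute[of i])
      qed
      from cross_block_constant_or_a_eq_2_minus_card[OF bip' this, of i0]
      show ?thesis using bip' \<open>i0 \<in> U\<close> by blast
    qed
  qed
  then show ?thesis using trivial_if_a_eq_2_minus_card trivial_if_cross_block_constant by blast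
qed

end

lemma regular_two_graph_regular_seidel_matrix:
  assumes "simple_graph E" and "regular_two_graph E"
  obtains a where "regular_seidel_matrix E (\<lambda>i j. seidel_matrix E $ i $ j) a"
proof -
  obtain a b where square: "seidel_matrix E ** seidel_matrix E = a *\<^sub>R seidel_matrix E + b *\<^sub>R mat 1"
    using regular_two_graph_seidel_square[OF assms] .
  have "regular_seidel_matrix E (\<lambda>i j. seidel_matrix E $ i $ j) a"
  proof
    fix i j
    show "seidel_matrix E $ i $ j = (if i = j then 0 else if E i j then -1 else 1)"
      by (rule seidel_matrix_entry[OF assms(1)])
    assume "i \<noteq> j"
    have "(\<Sum>k\<in>UNIV. seidel_matrix E $ i $ k * seidel_matrix E $ k $ j) =
        (seidel_matrix E ** seidel_matrix E) $ i $ j"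
      by (simp add: matrix_matrix_mult_def)
    also have "\<dots> = a * seidel_matrix E $ i $ j"
      unfolding square using \<open>i \<noteq> j\<close> by (simp add: mat_def)
    finally show "(\<Sum>k\<in>UNIV. seidel_matrix E $ i $ k * seidel_matrix E $ k $ j) =
        a * seidel_matrix E $ i $ j" .
  qed (rule assms(1))
  then show ?thesis by (rule that)
qed

theorem proposition7:
  fixes E :: "'n::finite \<Rightarrow> 'n \<Rightarrow> bool"
  assumes "simple_graph E"
    and "regular_two_graph E"
    and "\<not> trivial_switching_class E"
  shows "\<not> bipartite E"
proof
  assume "bipartite E"
  then obtain U where "is_bipartition E U" by (auto simp: bipartite_iff_bipartition)
  obtain a where "regular_seidel_matrix E (\<lambda>i j. seidel_matrix E $ i $ j) a"
    using regular_two_graph_regular_seidel_matrix[OF assms(1,2)] .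
  then have "trivial_switching_class E"
    using regular_seidel_matrix.trivial_if_bipartition \<open>is_bipartition E U\<close> by blast
  with assms(3) show False by contradiction
qed

end
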